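(* Let $N\ge2$ and let $a_1,\dots,a_m$ be transpositions in $S_N$ each of the form $(\alpha,N)$ with $1\le\alpha\le N-1$. Let $\pi$ be the partition of $\{1,\dots,m\}$ in which $j,k$ are in the same block iff $a_j=a_k$, and let $\sigma=a_1\cdots a_m$. Then $2|\pi|\ge|\sigma|+m$ if and only if $\pi\in NC_{1,2}(m)$.
   Context: $|\pi|$ is the number of blocks of $\pi$. For a permutation $\sigma$, $|\sigma|$ is the minimal number of transpositions whose product is $\sigma$. A partition of $\{1,\dots,m\}$ is non-crossing if there are no $k_1<l_1<k_2<l_2$ with $k_1,k_2$ in one block and $l_1,l_2$ in a different block. $NC_{1,2}(m)$ is the set of non-crossing partitions of $\{1,\dots,m\}$ all of whose blocks have one or two elements. *)

theory Defs
  imports "HOL-Library.Disjoint_Sets" "HOL-Combinatorics.Transposition"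
begin

text \<open>Permutations of {1..N} are represented as functions nat => nat fixing everything
outside {1..N}; a transposition of S_N is transpose i j with i ~= j in {1..N}.\<close>

definition is_transp :: "nat \<Rightarrow> (nat \<Rightarrow> nat) \<Rightarrow> bool" where
  "is_transp N t \<longleftrightarrow> (\<exists>i j. i \<in> {1..N} \<and> j \<in> {1..N} \<and> i \<noteq> j \<and> t = transpose i j)"

definition perm_length :: "nat \<Rightarrow> (nat \<Rightarrow> nat) \<Rightarrow> nat" where
  "perm_length N \<sigma> = (LEAST k. \<exists>ts. length ts = k \<and> (\<forall>t\<in>set ts. is_transp N t)
                                  \<and> \<sigma> = foldr (\<circ>) ts id)"

definition seq_prod :: "(nat \<Rightarrow> nat \<Rightarrow> nat) \<Rightarrow> nat \<Rightarrow> nat \<Rightarrow> nat" where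
  "seq_prod a m = foldr (\<lambda>j f. a j \<circ> f) [1..<m+1] id"

definition kernel_partition :: "(nat \<Rightarrow> 'b) \<Rightarrow> nat \<Rightarrow> nat set set" where
  "kernel_partition a m = {{k \<in> {1..m}. a k = a j} | j. j \<in> {1..m}}"

definition noncrossing :: "nat set set \<Rightarrow> bool" where
  "noncrossing P \<longleftrightarrow> (\<forall>B\<in>P. \<forall>C\<in>P. B \<noteq> C \<longrightarrow>
     \<not> (\<exists>k1 l1 k2 l2. k1 < l1 \<and> l1 < k2 \<and> k2 < l2 \<and> k1 \<in> B \<and> k2 \<in> B \<and> l1 \<in> C \<and> l2 \<in> C))"

definition NC12 :: "nat \<Rightarrow> nat set set set" where
  "NC12 m = {P. partition_on {1..m} P \<and> noncrossing P \<and> (\<forall>B\<in>P. card B = 1 \<or> card B = 2)}"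

end

theory Submission
  imports Defs "HOL-Library.Sublist"
begin

(* We work with the word ws = [a_1, ..., a_m] of transpositions and its product prodw ws.
   (1) Length of permutations: if sigma fixes a point a, then |sigma o t| = |sigma| + 1 for
       every transposition t moving a (perm_length_comp_fresh).  The proof takes a shortest
       word for sigma o t, appends t, and cancels two letters moving a after sliding them
       next to each other.
   (2) Star transpositions: inserting into a word a letter that occurs nowhere else raises the
       length by one; hence 2 * #letters <= |prodw ws| + length ws always holds, and we call
       ws tight when equality holds (card_le_perm_length, tight).
   (3) Words in NC(1,2): every letter occurs at most twice and no two letters alternate as
       x..y..x..y.  Deleting a letter occurring once, or an adjacent pair of a letter occurring
       nowhere else, preserves this, and every nonempty such word admits one of these deletions.
   (4) Tightness behaves in the same way under both deletions, and a tight word admitting neither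
       deletion would have trivial product, which an innermost pair b w b rules out; by induction
       on the length, tight <-> NC(1,2) (tight_iff_nc12).
   (5) Blocks, block sizes and crossings of the kernel partition correspond to the letters of
       the word, their multiplicities and alternating subsequences, which yields lemma5. *)

definition prodw :: "(nat \<Rightarrow> nat) list \<Rightarrow> nat \<Rightarrow> nat" where
  "prodw ts = foldr (\<circ>) ts id"

lemma prodw_Nil [simp]: "prodw [] = id"
  by (simp add: prodw_def)

lemma prodw_Cons [simp]: "prodw (t # ts) = t \<circ> prodw ts"
  by (simp add: prodw_def)

lemma prodw_append [simp]: "prodw (xs @ ys) = prodw xs \<circ> prodw ys"
  by (induction xs) (simp_all add: comp_assoc)

lemma perm_length_le:
  assumes "\<forall>t\<in>set ts. is_transp N t"
  shows "perm_length N (prodw ts) \<le> length ts"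
  unfolding perm_length_def by (rule Least_le) (use assms in \<open>auto simp: prodw_def\<close>)

lemma perm_length_witness:
  assumes "\<forall>t\<in>set ts. is_transp N t"
  obtains us where "\<forall>t\<in>set us. is_transp N t" "prodw us = prodw ts"
    "length us = perm_length N (prodw ts)"
proof -
  have "\<exists>k us. length us = k \<and> (\<forall>t\<in>set us. is_transp N t) \<and> prodw ts = foldr (\<circ>) us id"
    using assms by (auto simp: prodw_def)
  then have "\<exists>us. length us = perm_length N (prodw ts) \<and> (\<forall>t\<in>set us. is_transp N t)
             \<and> prodw ts = foldr (\<circ>) us id"
    unfolding perm_length_def by (rule LeastI_ex)
  then show ?thesis using that by (auto simp: prodw_def)
qed

lemma perm_length_eq_0:
  assumes "\<forall>t\<in>set ts. is_transp N t" "perm_length N (prodw ts) = 0"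
  shows "prodw ts = id"
  using perm_length_witness[OF assms(1)] assms(2) by (metis length_0_conv prodw_Nil)

lemma is_transp_comp_self: "is_transp N t \<Longrightarrow> t \<circ> t = id"
  by (auto simp: is_transp_def)

lemma perm_length_comp_transp:
  assumes "\<forall>t\<in>set ts. is_transp N t" "is_transp N t"
  shows "perm_length N (prodw ts \<circ> t) \<le> perm_length N (prodw ts) + 1"
    and "perm_length N (prodw ts) \<le> perm_length N (prodw ts \<circ> t) + 1"
proof -
  have le: "perm_length N (prodw ts' \<circ> t) \<le> perm_length N (prodw ts') + 1"
    if word: "\<forall>t\<in>set ts'. is_transp N t" for ts'
  proof -
    obtain us where us: "\<forall>t\<in>set us. is_transp N t" "prodw us = prodw ts'"
      "length us = perm_length N (prodw ts')"
      by (rule perm_length_witness[OF word])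
    have "perm_length N (prodw (us @ [t])) \<le> length (us @ [t])"
      by (rule perm_length_le) (use us(1) assms(2) in auto)
    then show ?thesis using us(2,3) by simp
  qed
  then show "perm_length N (prodw ts \<circ> t) \<le> perm_length N (prodw ts) + 1"
    using assms(1) .
  have "prodw ts = prodw (ts @ [t]) \<circ> t"
    using is_transp_comp_self[OF assms(2)] by (simp add: comp_assoc)
  then show "perm_length N (prodw ts) \<le> perm_length N (prodw ts \<circ> t) + 1"
    using le[of "ts @ [t]"] assms by simp
qed

lemma is_transpI: "i \<in> {1..N} \<Longrightarrow> j \<in> {1..N} \<Longrightarrow> i \<noteq> j \<Longrightarrow> is_transp N (transpose i j)"
  unfolding is_transp_def by blast

lemma is_transp_moved:
  assumes "is_transp N t" "t a \<noteq> a"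
  shows "t = transpose a (t a)" "a \<in> {1..N}" "t a \<in> {1..N}"
proof -
  obtain i j where ij: "i \<in> {1..N}" "j \<in> {1..N}" "t = transpose i j"
    using assms(1) by (auto simp: is_transp_def)
  then have "a = i \<and> t a = j \<or> a = j \<and> t a = i"
    using assms(2) by (auto simp: transpose_def split: if_splits)
  then show "t = transpose a (t a)" "a \<in> {1..N}" "t a \<in> {1..N}"
    using ij by (auto simp: transpose_commute)
qed

lemma bij_prodw: "\<forall>t\<in>set ts. is_transp N t \<Longrightarrow> bij (prodw ts)"
  by (induction ts) (auto simp: is_transp_def intro: bij_comp)

lemma prodw_fixes_outside: "\<forall>t\<in>set ts. is_transp N t \<Longrightarrow> x \<notin> {1..N} \<Longrightarrow> prodw ts x = x"
  by (induction ts) (auto simp: is_transp_def)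

lemma prodw_fixes: "\<forall>t\<in>set ts. t a = a \<Longrightarrow> prodw ts a = a"
  by (induction ts) auto

lemma second_mover:
  assumes "\<forall>t\<in>set (A @ t1 # R). is_transp N t" "\<forall>t\<in>set A. t a = a" "t1 a \<noteq> a"
    and "prodw (A @ t1 # R) a = a"
  shows "\<exists>t\<in>set R. t a \<noteq> a"
proof (rule ccontr)
  assume "\<not> ?thesis"
  then have "prodw (A @ t1 # R) a = prodw A (t1 a)"
    by (simp add: prodw_fixes)
  moreover have "inj (prodw A)"
    using bij_prodw[of A N] assms(1) bij_is_inj by auto
  ultimately show False
    using assms(2-4) prodw_fixes[of A a] by (metis injD)
qed

lemma transpose_shift:
  "a \<noteq> z \<Longrightarrow> a \<noteq> y \<Longrightarrow> z \<noteq> y \<Longrightarrow> transpose a z \<circ> transpose a y = transpose a y \<circ> transpose z y"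
  by (auto simp: fun_eq_iff transpose_def)

lemma slide_past_fixer:
  assumes word: "\<forall>s\<in>set C. is_transp N s" and fixed: "prodw C a = a"
    and t: "is_transp N t" "t a \<noteq> a"
  obtains z where "t \<circ> prodw C = prodw C \<circ> transpose a z" "z \<in> {1..N}" "z \<noteq> a"
proof -
  define x where "x = t a"
  have tx: "t = transpose a x" "x \<in> {1..N}"
    unfolding x_def using is_transp_moved[OF t] by blast+
  have bij: "bij (prodw C)"
    by (rule bij_prodw[OF word])
  define z where "z = inv (prodw C) x"
  have Cz: "prodw C z = x"
    unfolding z_def by (rule surj_f_inv_f[OF bij_is_surj[OF bij]])
  have "inv (prodw C) a = a"
    by (rule inv_f_eq[OF bij_is_inj[OF bij] fixed])
  then have "t \<circ> prodw C = prodw C \<circ> transpose a z"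
    using transpose_comp_eq[OF bij, of a x] tx(1) z_def by simp
  moreover have "z \<in> {1..N}"
  proof (rule ccontr)
    assume "z \<notin> {1..N}"
    then have "prodw C z = z"
      by (rule prodw_fixes_outside[OF word])
    then show False
      using Cz tx(2) \<open>z \<notin> {1..N}\<close> by simp
  qed
  moreover have "z \<noteq> a"
    using Cz fixed t(2) x_def by auto
  ultimately show ?thesis
    by (rule that)
qed

(* A word fixing a in which some letter moves a contains at least two movers; sliding the
   first one next to the second exhibits the product in the form below. *)
lemma first_two_movers:
  assumes word: "\<forall>t\<in>set ts. is_transp N t" and fixed: "prodw ts a = a"
    and moves: "\<exists>t\<in>set ts. t a \<noteq> a"
  obtains A C D z y where
    "\<forall>t\<in>set (A @ C @ D). is_transp N t" "\<forall>t\<in>set (A @ C). t a = a"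
    "prodw ts = prodw (A @ C) \<circ> (transpose a z \<circ> transpose a y) \<circ> prodw D"
    "a \<in> {1..N}" "z \<in> {1..N}" "y \<in> {1..N}" "z \<noteq> a" "y \<noteq> a"
    "length ts = length (A @ C @ D) + 2"
    "length (filter (\<lambda>t. t a \<noteq> a) ts) = length (filter (\<lambda>t. t a \<noteq> a) D) + 2"
proof -
  obtain A t1 R where ts: "ts = A @ t1 # R" "t1 a \<noteq> a" "\<forall>t\<in>set A. t a = a"
    using split_list_first_prop[OF moves] by blast
  have "\<exists>t\<in>set R. t a \<noteq> a"
    using second_mover[of A t1 R N a] word fixed ts by simp
  then obtain C t2 D where R: "R = C @ t2 # D" "t2 a \<noteq> a" "\<forall>t\<in>set C. t a = a"
    using split_list_first_prop[of R "\<lambda>t. t a \<noteq> a"] by blast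
  have words: "\<forall>t\<in>set (A @ C @ D). is_transp N t" "\<forall>t\<in>set C. is_transp N t"
    "is_transp N t1" "is_transp N t2"
    using word ts(1) R(1) by auto
  obtain z where slide: "t1 \<circ> prodw C = prodw C \<circ> transpose a z" and z: "z \<in> {1..N}" "z \<noteq> a"
    using slide_past_fixer[OF words(2) prodw_fixes[OF R(3)] words(3) ts(2)] by blast
  define y where "y = t2 a"
  have t2: "t2 = transpose a y" "a \<in> {1..N}" "y \<in> {1..N}" "y \<noteq> a"
    unfolding y_def using is_transp_moved[OF words(4) R(2)] R(2) by blast+
  have "prodw ts = prodw A \<circ> (t1 \<circ> prodw C) \<circ> (t2 \<circ> prodw D)"
    using ts(1) R(1) by (simp add: comp_assoc)
  also have "\<dots> = prodw A \<circ> (prodw C \<circ> transpose a z) \<circ> (transpose a y \<circ> prodw D)"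
    using slide t2(1) by simp
  finally have prod: "prodw ts = prodw (A @ C) \<circ> (transpose a z \<circ> transpose a y) \<circ> prodw D"
    by (simp add: comp_assoc)
  have fixers: "\<forall>t\<in>set (A @ C). t a = a"
    using ts(3) R(3) by auto
  have len: "length ts = length (A @ C @ D) + 2"
    using ts(1) R(1) by simp
  have movers: "length (filter (\<lambda>t. t a \<noteq> a) ts) = length (filter (\<lambda>t. t a \<noteq> a) D) + 2"
    using ts R by (simp add: filter_empty_conv)
  show ?thesis
    by (rule that[OF words(1) fixers prod t2(2) z(1) t2(3) z(2) t2(4) len movers])
qed

(* If a word fixes a but some letter moves a, then two letters can be cancelled: the first two
   movers either cancel, or are rewritten into one mover followed by a non-mover, and we
   recurse on the number of movers. *)
lemma cancel_movers:
  assumes "\<forall>t\<in>set ts. is_transp N t" "prodw ts a = a" "\<exists>t\<in>set ts. t a \<noteq> a"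
  shows "\<exists>us. (\<forall>t\<in>set us. is_transp N t) \<and> prodw us = prodw ts \<and> length us + 2 \<le> length ts"
  using assms
proof (induction "length (filter (\<lambda>t. t a \<noteq> a) ts)" arbitrary: ts rule: less_induct)
  case less
  obtain A C D z y where words: "\<forall>t\<in>set (A @ C @ D). is_transp N t"
    and fixers: "\<forall>t\<in>set (A @ C). t a = a"
    and prod_ts: "prodw ts = prodw (A @ C) \<circ> (transpose a z \<circ> transpose a y) \<circ> prodw D"
    and range: "a \<in> {1..N}" "z \<in> {1..N}" "y \<in> {1..N}" and za: "z \<noteq> a" and ya: "y \<noteq> a"
    and len: "length ts = length (A @ C @ D) + 2"
    and movers: "length (filter (\<lambda>t. t a \<noteq> a) ts) = length (filter (\<lambda>t. t a \<noteq> a) D) + 2"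
    by (rule first_two_movers[OF less.prems])
  show ?case
  proof (cases "z = y")
    case True
    then have "prodw (A @ C @ D) = prodw ts"
      using prod_ts by (simp add: comp_assoc)
    then show ?thesis
      using words len by (intro exI[of _ "A @ C @ D"]) simp
  next
    case False
    define ts' where "ts' = A @ C @ transpose a y # transpose z y # D"
    have "prodw ts' = prodw (A @ C) \<circ> (transpose a y \<circ> transpose z y) \<circ> prodw D"
      by (simp add: ts'_def comp_assoc)
    then have prod_ts': "prodw ts' = prodw ts"
      using prod_ts transpose_shift[OF za[symmetric] ya[symmetric] False] by simp
    have word': "\<forall>t\<in>set ts'. is_transp N t"
      using words range za ya False by (auto simp: ts'_def intro!: is_transpI)
    have "transpose z y a = a"
      using za ya by simp
    then have fewer: "length (filter (\<lambda>t. t a \<noteq> a) ts') < length (filter (\<lambda>t. t a \<noteq> a) ts)"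
      using fixers movers ya by (simp add: ts'_def filter_empty_conv)
    have mover: "\<exists>t\<in>set ts'. t a \<noteq> a"
      using ya by (simp add: ts'_def)
    have fixed: "prodw ts' a = a"
      using prod_ts' less.prems(2) by simp
    obtain us where "\<forall>t\<in>set us. is_transp N t" "prodw us = prodw ts'"
      "length us + 2 \<le> length ts'"
      using less.hyps[OF fewer word' fixed mover] by blast
    then show ?thesis
      using prod_ts' len by (intro exI[of _ us]) (simp add: ts'_def)
  qed
qed

lemma perm_length_comp_fresh:
  assumes word: "\<forall>t\<in>set ts. is_transp N t" and fixed: "prodw ts a = a"
    and t: "is_transp N t" "t a \<noteq> a"
  shows "perm_length N (prodw ts \<circ> t) = perm_length N (prodw ts) + 1"
proof -
  obtain us where us: "\<forall>t\<in>set us. is_transp N t" "prodw us = prodw ts \<circ> t"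
    and us_len: "length us = perm_length N (prodw ts \<circ> t)"
    using perm_length_witness[of "ts @ [t]" N] word t(1) by auto
  then have "prodw (us @ [t]) = prodw ts"
    using is_transp_comp_self[OF t(1)] by (simp add: comp_assoc)
  then obtain vs where vs: "\<forall>t\<in>set vs. is_transp N t" "prodw vs = prodw ts"
    "length vs + 2 \<le> length (us @ [t])"
    using cancel_movers[of "us @ [t]" N a] us(1) t fixed by auto
  have "perm_length N (prodw ts) \<le> length vs"
    using perm_length_le[OF vs(1)] vs(2) by simp
  then show ?thesis
    using vs(3) us_len perm_length_comp_transp(1)[OF word t(1)] by simp
qed

definition star_transp :: "nat \<Rightarrow> (nat \<Rightarrow> nat) \<Rightarrow> bool" where
  "star_transp N w \<longleftrightarrow> (\<exists>\<alpha>. 1 \<le> \<alpha> \<and> \<alpha> \<le> N - 1 \<and> w = transpose \<alpha> N)"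

lemma star_transpD:
  assumes "star_transp N w" "N \<ge> 2"
  shows "w = transpose (w N) N" "w N \<in> {1..N}" "w N \<noteq> N" "is_transp N w"
proof -
  obtain \<alpha> where \<alpha>: "1 \<le> \<alpha>" "\<alpha> \<le> N - 1" "w = transpose \<alpha> N"
    using assms(1) by (auto simp: star_transp_def)
  then show "w = transpose (w N) N" "w N \<in> {1..N}" "w N \<noteq> N"
    using assms(2) by auto
  show "is_transp N w"
    using \<alpha> assms(2) by (auto intro!: is_transpI)
qed

lemma star_transp_fixes_other:
  assumes "N \<ge> 2" "star_transp N v" "star_transp N w" "v \<noteq> w"
  shows "v (w N) = w N"
  using star_transpD[OF assms(2,1)] star_transpD[OF assms(3,1)] assms(4)
  by (metis transpose_apply_other)

lemma prodw_fixes_fresh: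
  assumes "N \<ge> 2" "\<forall>v\<in>set ws. star_transp N v" "star_transp N w" "w \<notin> set ws"
  shows "prodw ws (w N) = w N"
  using assms star_transp_fixes_other by (intro prodw_fixes) metis

(* Inserting a letter that occurs nowhere else in a word of star transpositions increases the
   length of the product by one: slide the letter to the right end and apply the previous lemma. *)
lemma perm_length_insert_fresh:
  assumes N: "N \<ge> 2" and star: "\<forall>v\<in>set (p @ w # q). star_transp N v"
    and fresh: "w \<notin> set p" "w \<notin> set q"
  shows "perm_length N (prodw (p @ w # q)) = perm_length N (prodw (p @ q)) + 1"
proof -
  define a where "a = w N"
  have "star_transp N w"
    using star by simp
  then have w: "w = transpose a N" "a \<in> {1..N}" "a \<noteq> N" "is_transp N w"
    unfolding a_def using star_transpD[OF _ N] by blast+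
  have words: "\<forall>t\<in>set q. is_transp N t" "\<forall>t\<in>set (p @ q). is_transp N t"
    using star star_transpD(4)[OF _ N] by auto
  have fix_q: "prodw q a = a" and fix_pq: "prodw (p @ q) a = a"
    using prodw_fixes_fresh[OF N, of _ w] star fresh unfolding a_def by auto
  have "w a \<noteq> a"
    using w(1,3) by simp
  then obtain z where slide: "w \<circ> prodw q = prodw q \<circ> transpose a z" and z: "z \<in> {1..N}" "z \<noteq> a"
    using slide_past_fixer[OF words(1) fix_q w(4)] by blast
  then have prod: "prodw (p @ w # q) = prodw (p @ q) \<circ> transpose a z"
    by (simp add: comp_assoc)
  have "is_transp N (transpose a z)"
    using w(2) z by (auto intro!: is_transpI)
  then show ?thesis
    unfolding prod using perm_length_comp_fresh[OF words(2) fix_pq] z(2) by simp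
qed

(* The general inequality 2 * #letters <= |prodw ws| + length ws for star words: a new letter
   raises the length by one, a repeated letter lowers it by at most one. *)
lemma card_le_perm_length:
  assumes N: "N \<ge> 2" and "\<forall>w\<in>set ws. star_transp N w"
  shows "2 * card (set ws) \<le> perm_length N (prodw ws) + length ws"
  using assms(2)
proof (induction ws rule: rev_induct)
  case Nil
  then show ?case by simp
next
  case (snoc w ws)
  then have IH: "2 * card (set ws) \<le> perm_length N (prodw ws) + length ws"
    and word: "\<forall>t\<in>set ws. is_transp N t" and w: "is_transp N w"
    using star_transpD(4)[OF _ N] by auto
  show ?case
  proof (cases "w \<in> set ws")
    case True
    then have card: "card (set (ws @ [w])) = card (set ws)"
      by (simp add: insert_absorb)
    have prod: "prodw (ws @ [w]) = prodw ws \<circ> w"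
      by simp
    show ?thesis
      unfolding card prod length_append_singleton
      using IH perm_length_comp_transp(2)[OF word w] by linarith
  next
    case False
    then have card: "card (set (ws @ [w])) = card (set ws) + 1"
      by simp
    have step: "perm_length N (prodw (ws @ [w])) = perm_length N (prodw ws) + 1"
      using perm_length_insert_fresh[OF N, of ws w "[]"] snoc.prems False by simp
    show ?thesis
      unfolding card step length_append_singleton using IH by simp
  qed
qed

definition crossing :: "'a list \<Rightarrow> bool" where
  "crossing xs \<longleftrightarrow> (\<exists>x y. x \<noteq> y \<and> subseq [x, y, x, y] xs)"

definition nc12 :: "'a list \<Rightarrow> bool" where
  "nc12 xs \<longleftrightarrow> (\<forall>x. count_list xs x \<le> 2) \<and> \<not> crossing xs"

lemma count_list_subseq: "subseq ys xs \<Longrightarrow> count_list ys z \<le> count_list xs z"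
  using list_emb_length[OF subseq_filter[of ys xs "(=) z"]]
  by (simp add: count_list_eq_length_filter)

lemma subseq_pattern4:
  "subseq [a, b, c, d] (s0 @ a # s1 @ b # s2 @ c # s3 @ d # s4)"
  by (intro subseq_drop_many subseq_Cons2 list_emb_Nil)

lemma filter_remove_fresh: "w \<notin> set xs \<Longrightarrow> filter (\<lambda>z. z \<noteq> w) xs = xs"
  by (induction xs) auto

lemma crossing_filter:
  assumes "\<forall>y. \<not> subseq [w, y, w] xs"
  shows "crossing xs \<longleftrightarrow> crossing (filter (\<lambda>z. z \<noteq> w) xs)"
proof
  assume "crossing xs"
  then obtain x y where xy: "x \<noteq> y" "subseq [x, y, x, y] xs"
    unfolding crossing_def by blast
  have "subseq [x, y, x] xs" "subseq [y, x, y] xs"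
    using subseq_order.trans[OF _ xy(2)] by simp_all
  then have "x \<noteq> w" "y \<noteq> w"
    using assms by auto
  then show "crossing (filter (\<lambda>z. z \<noteq> w) xs)"
    using subseq_filter[OF xy(2), of "\<lambda>z. z \<noteq> w"] xy(1) unfolding crossing_def by auto
next
  assume "crossing (filter (\<lambda>z. z \<noteq> w) xs)"
  then show "crossing xs"
    unfolding crossing_def using subseq_filter_left subseq_order.trans by blast
qed

lemma crossing_remove_single:
  assumes "w \<notin> set p" "w \<notin> set q"
  shows "crossing (p @ w # q) \<longleftrightarrow> crossing (p @ q)"
proof -
  have "count_list (p @ w # q) w = 1"
    using assms by (simp add: count_list_0_iff)
  then have "\<not> subseq [w, y, w] (p @ w # q)" for y
    using count_list_subseq[of "[w, y, w]" "p @ w # q" w] by (cases "y = w") auto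
  moreover have "filter (\<lambda>z. z \<noteq> w) (p @ w # q) = p @ q"
    using assms by (simp add: filter_remove_fresh)
  ultimately show ?thesis
    using crossing_filter by metis
qed

lemma crossing_remove_pair:
  assumes "w \<notin> set p" "w \<notin> set q"
  shows "crossing (p @ w # w # q) \<longleftrightarrow> crossing (p @ q)"
proof -
  have "\<not> subseq [w, y, w] (p @ w # w # q)" for y
  proof
    assume "subseq [w, y, w] (p @ w # w # q)"
    then obtain xs1 xs2 where xs: "[w, y, w] = xs1 @ xs2" "subseq xs1 p" "subseq xs2 (w # w # q)"
      by (rule subseq_appendE)
    have "w \<notin> set xs1"
      using xs(2) assms(1) subseq_order.trans[of "[w]" xs1 p] by (auto simp: subseq_singleton_left)
    then have "subseq [w, y, w] (w # w # q)"
      using xs by (cases xs1) auto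
    then have "subseq [y, w] (w # q)"
      by simp
    then show False
      using assms(2) by (cases "y = w") (auto simp: subseq_singleton_left dest: subseq_Cons')
  qed
  moreover have "filter (\<lambda>z. z \<noteq> w) (p @ w # w # q) = p @ q"
    using assms by (simp add: filter_remove_fresh)
  ultimately show ?thesis
    using crossing_filter by metis
qed

lemma count_bound_remove_block:
  assumes "w \<notin> set p" "w \<notin> set q" "k \<le> 2"
  shows "(\<forall>x. count_list (p @ replicate k w @ q) x \<le> 2) \<longleftrightarrow> (\<forall>x. count_list (p @ q) x \<le> 2)"
proof -
  have count: "count_list (p @ replicate k w @ q) x = count_list (p @ q) x + (if x = w then k else 0)"
    for x by (induction k) auto
  have fresh: "count_list (p @ q) w = 0"
    using assms by (simp add: count_list_0_iff)
  show ?thesis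
  proof
    assume bound: "\<forall>x. count_list (p @ replicate k w @ q) x \<le> 2"
    show "\<forall>x. count_list (p @ q) x \<le> 2"
    proof
      fix x
      show "count_list (p @ q) x \<le> 2"
        using bound[rule_format, of x] unfolding count by linarith
    qed
  next
    assume bound: "\<forall>x. count_list (p @ q) x \<le> 2"
    show "\<forall>x. count_list (p @ replicate k w @ q) x \<le> 2"
      unfolding count using bound fresh assms(3) by simp
  qed
qed

(* NC(1,2) is invariant under deleting a single letter, or an adjacent pair of a letter not
   occurring elsewhere (otherwise that letter occurs three times). *)
lemma nc12_remove_single:
  assumes "w \<notin> set p" "w \<notin> set q"
  shows "nc12 (p @ w # q) \<longleftrightarrow> nc12 (p @ q)"
  using count_bound_remove_block[OF assms, of 1] crossing_remove_single[OF assms]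
  unfolding nc12_def by simp

lemma nc12_remove_pair: "nc12 (p @ w # w # q) \<longleftrightarrow> w \<notin> set (p @ q) \<and> nc12 (p @ q)"
proof (cases "w \<in> set (p @ q)")
  case True
  then have "count_list (p @ q) w \<noteq> 0"
    by (simp only: count_list_0_iff not_not)
  then have "count_list (p @ w # w # q) w > 2"
    by simp
  then show ?thesis
    using True unfolding nc12_def by (metis not_le)
next
  case False
  then have "w \<notin> set p" "w \<notin> set q"
    by auto
  then show ?thesis
    using count_bound_remove_block[of w p q 2] crossing_remove_pair[of w p q] False
    unfolding nc12_def by (simp add: numeral_2_eq_2)
qed

(* In a non-crossing word, any repeated letter leads to an innermost pair y..r..y whose
   interior r consists of letters occurring only once: an inner letter occurring again would
   either cross y or give a shorter pair. *)
lemma innermost_pair: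
  assumes "\<not> crossing xs" "xs = p @ y # r @ y # q"
  shows "\<exists>p y r q. xs = p @ y # r @ y # q \<and> (\<forall>z\<in>set r. count_list xs z = 1)"
  using assms(2)
proof (induction "length r" arbitrary: p y r q rule: less_induct)
  case less
  show ?case
  proof (cases "\<forall>z\<in>set r. count_list xs z = 1")
    case True
    then show ?thesis using less.prems by blast
  next
    case False
    then obtain z where z: "z \<in> set r" "count_list xs z \<noteq> 1"
      by blast
    obtain r1 r2 where r: "r = r1 @ z # r2" "z \<notin> set r1"
      using split_list_first[OF z(1)] by blast
    consider "z = y" | "z \<noteq> y" "z \<in> set p" | "z \<noteq> y" "z \<in> set q" | "z \<noteq> y" "z \<notin> set p" "z \<notin> set q"
      by blast
    then show ?thesis
    proof cases
      case 1
      then have "xs = p @ y # r1 @ y # (r2 @ y # q)"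
        using less.prems r by simp
      then show ?thesis using less.hyps r by simp
    next
      case 2
      then obtain p1 p2 where "p = p1 @ z # p2"
        using split_list by metis
      then have "subseq [z, y, z, y] xs"
        using less.prems r subseq_pattern4[of z y z y p1 "p2" r1 "r2" q] by simp
      then show ?thesis using assms(1) 2 unfolding crossing_def by blast
    next
      case 3
      then obtain q1 q2 where "q = q1 @ z # q2"
        using split_list by metis
      then have "subseq [y, z, y, z] xs"
        using less.prems r subseq_pattern4[of y z y z p r1 r2 q1 q2] by simp
      then show ?thesis using assms(1) 3(1)[symmetric] unfolding crossing_def by blast
    next
      case 4
      \<comment> \<open>Otherwise z occurs twice inside r, giving a pair with a shorter gap.\<close>
      then have "z \<in> set r2"
        using z(2) less.prems r by (auto simp: count_list_0_iff)
      then obtain r21 r22 where r2: "r2 = r21 @ z # r22"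
        using split_list by metis
      then have "xs = (p @ y # r1) @ z # r21 @ z # (r22 @ y # q)"
        using less.prems r by simp
      moreover have "length r21 < length r"
        using r r2 by simp
      ultimately show ?thesis using less.hyps by blast
    qed
  qed
qed

lemma split_twice:
  assumes "count_list xs x \<ge> 2"
  obtains p r q where "xs = p @ x # r @ x # q"
proof -
  have "x \<in> set xs"
  proof (rule ccontr)
    assume "x \<notin> set xs"
    then have "count_list xs x = 0" by (simp add: count_list_0_iff)
    with assms show False by simp
  qed
  then obtain p s where xs: "xs = p @ x # s" "x \<notin> set p"
    using split_list_first by metis
  then have "count_list p x = 0"
    by (simp add: count_list_0_iff)
  then have "count_list s x \<noteq> 0"
    using assms xs(1) by simp
  then have "x \<in> set s"
    by (simp add: count_list_0_iff)
  then show ?thesis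
    using that xs(1) split_list by metis
qed

lemma nc12_reducible:
  assumes "nc12 xs" "xs \<noteq> []"
  shows "(\<exists>w\<in>set xs. count_list xs w = 1) \<or> (\<exists>p w q. xs = p @ w # w # q)"
proof (rule disjCI)
  assume no_pair: "\<not> (\<exists>p w q. xs = p @ w # w # q)"
  show "\<exists>w\<in>set xs. count_list xs w = 1"
  proof (rule ccontr)
    assume no_single: "\<not> (\<exists>w\<in>set xs. count_list xs w = 1)"
    have "hd xs \<in> set xs"
      using assms(2) by simp
    moreover have "count_list xs (hd xs) \<noteq> 0"
      using \<open>hd xs \<in> set xs\<close> by (simp add: count_list_0_iff)
    ultimately have "count_list xs (hd xs) \<ge> 2"
      using no_single by fastforce
    then obtain p r q where "xs = p @ hd xs # r @ hd xs # q"
      by (rule split_twice)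
    moreover have "\<not> crossing xs"
      using assms(1) by (simp add: nc12_def)
    ultimately obtain p' y r' q' where xs: "xs = p' @ y # r' @ y # q'"
      and r': "\<forall>z\<in>set r'. count_list xs z = 1"
      using innermost_pair by metis
    have "r' = []"
    proof (rule ccontr)
      assume "r' \<noteq> []"
      then have "hd r' \<in> set xs" "count_list xs (hd r') = 1"
        using r' xs by auto
      then show False
        using no_single by blast
    qed
    then show False
      using xs no_pair by blast
  qed
qed

lemma innermost_before_last:
  assumes "\<not> crossing ys" and twice: "\<forall>x\<in>set (ys @ [w]). count_list (ys @ [w]) x = 2"
    and no_adj: "\<not> (\<exists>p v q. ys @ [w] = p @ v # v # q)"
  shows "\<exists>p b q. ys = p @ b # w # b # q \<and> b \<noteq> w"
proof -
  have count_w: "count_list ys w = 1"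
    using twice by simp
  have "\<exists>x\<in>set ys. x \<noteq> w"
  proof (rule ccontr)
    assume only_w: "\<not> (\<exists>x\<in>set ys. x \<noteq> w)"
    then have "count_list ys w = length ys"
      by (induction ys) auto
    then have "ys = [w]"
      using count_w only_w by (cases ys) auto
    then have "ys @ [w] = [] @ w # w # []"
      by simp
    then show False
      using no_adj by blast
  qed
  then obtain x where x: "x \<in> set ys" "x \<noteq> w" by blast
  then have "count_list ys x = 2"
    using twice by auto
  then obtain p r q where "ys = p @ x # r @ x # q"
    by (metis split_twice order_refl)
  then obtain p' y r' q' where ys: "ys = p' @ y # r' @ y # q'"
    and r': "\<forall>z\<in>set r'. count_list ys z = 1"
    using innermost_pair assms(1) by metis
  have yw: "y \<noteq> w"
    using ys count_w by auto
  have r'_w: "set r' \<subseteq> {w}"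
  proof
    fix z
    assume z: "z \<in> set r'"
    then have "z \<in> set (ys @ [w])" "count_list ys z = 1"
      using ys r' by auto
    then show "z \<in> {w}"
      using twice by (cases "z = w") auto
  qed
  moreover have "r' \<noteq> []"
  proof
    assume "r' = []"
    then have "ys @ [w] = p' @ y # y # (q' @ [w])"
      using ys by simp
    then show False
      using no_adj by blast
  qed
  moreover have "count_list r' w \<le> 1"
    using count_w ys yw by simp
  ultimately have "r' = [w]"
    by (cases r') (auto simp: count_list_0_iff subset_singleton_iff)
  then show ?thesis
    using ys yw by auto
qed

lemma length_vs_card:
  assumes "\<forall>x\<in>set ws. count_list ws x \<ge> 2"
  shows "2 * card (set ws) \<le> length ws"
    and "2 * card (set ws) = length ws \<Longrightarrow> \<forall>x\<in>set ws. count_list ws x = 2"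
proof -
  have length: "length ws = (\<Sum>x\<in>set ws. count_list ws x)"
    using sum_count_set[of ws "set ws"] by simp
  have twice: "2 * card (set ws) = (\<Sum>x\<in>set ws. 2)"
    by simp
  show "2 * card (set ws) \<le> length ws"
    unfolding length twice using assms by (intro sum_mono) auto
  show "\<forall>x\<in>set ws. count_list ws x = 2" if eq: "2 * card (set ws) = length ws"
  proof
    fix x
    assume x: "x \<in> set ws"
    have "(\<Sum>x\<in>set ws. 2) = (\<Sum>x\<in>set ws. count_list ws x)"
      using eq unfolding length twice .
    then have "2 = count_list ws x"
      by (rule sum_mono_inv) (use assms x in auto)
    then show "count_list ws x = 2" by simp
  qed
qed

(* Tight words: equality in card_le_perm_length, i.e. 2|pi| >= |sigma| + m for the word. *)
definition tight :: "nat \<Rightarrow> (nat \<Rightarrow> nat) list \<Rightarrow> bool" where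
  "tight N ws \<longleftrightarrow> perm_length N (prodw ws) + length ws \<le> 2 * card (set ws)"

lemma tight_remove_single:
  assumes N: "N \<ge> 2" and star: "\<forall>v\<in>set (p @ w # q). star_transp N v"
    and fresh: "w \<notin> set p" "w \<notin> set q"
  shows "tight N (p @ w # q) \<longleftrightarrow> tight N (p @ q)"
proof -
  have "card (set (p @ w # q)) = card (set (p @ q)) + 1"
    using fresh by simp
  then show ?thesis
    unfolding tight_def perm_length_insert_fresh[OF assms] by simp
qed

lemma tight_remove_pair:
  assumes N: "N \<ge> 2" and star: "\<forall>v\<in>set (p @ w # w # q). star_transp N v"
  shows "tight N (p @ w # w # q) \<longleftrightarrow> w \<notin> set (p @ q) \<and> tight N (p @ q)"
proof -
  have "is_transp N w"
    using star star_transpD(4)[OF _ N] by simp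
  have "prodw (p @ w # w # q) = prodw p \<circ> (w \<circ> w) \<circ> prodw q"
    by (simp add: comp_assoc)
  then have prod: "prodw (p @ w # w # q) = prodw (p @ q)"
    using is_transp_comp_self[OF \<open>is_transp N w\<close>] by simp
  show ?thesis
  proof (cases "w \<in> set (p @ q)")
    case True
    \<comment> \<open>Same product and letters but two letters fewer: tightness fails by the general bound.\<close>
    then have "set (p @ w # w # q) = set (p @ q)"
      by auto
    then have "card (set (p @ w # w # q)) = card (set (p @ q))"
      by simp
    moreover have "2 * card (set (p @ q)) \<le> perm_length N (prodw (p @ q)) + length (p @ q)"
      by (rule card_le_perm_length[OF N]) (use star in simp)
    ultimately show ?thesis
      unfolding tight_def prod using True by simp
  next
    case False
    then have "card (set (p @ w # w # q)) = card (set (p @ q)) + 1"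
      by simp
    then show ?thesis
      unfolding tight_def prod using False by simp
  qed
qed

(* A word ys @ [w] with every letter twice, no equal adjacent letters and non-crossing ys does
   not multiply to the identity: following the point moved by w through the pattern b w b
   shows that it is not fixed. *)
lemma doubled_word_not_id:
  assumes N: "N \<ge> 2" and star: "\<forall>v\<in>set (ys @ [w]). star_transp N v"
    and twice: "\<forall>x\<in>set (ys @ [w]). count_list (ys @ [w]) x = 2"
    and no_adj: "\<not> (\<exists>p v q. ys @ [w] = p @ v # v # q)"
    and nc: "\<not> crossing ys"
  shows "prodw (ys @ [w]) \<noteq> id"
proof -
  obtain p b q where ys: "ys = p @ b # w # b # q" and bw: "b \<noteq> w"
    using innermost_before_last[OF nc twice no_adj] by blast
  have "count_list (ys @ [w]) w = 2" "count_list (ys @ [w]) b = 2"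
    using twice ys by auto
  then have "count_list p w = 0" "count_list q w = 0" "count_list q b = 0"
    using ys bw by simp_all
  then have fresh: "w \<notin> set p" "w \<notin> set q" "b \<notin> set q"
    by (simp_all add: count_list_0_iff)
  have sw: "star_transp N w" and sb: "star_transp N b"
    and sp: "\<forall>v\<in>set p. star_transp N v" and sq: "\<forall>v\<in>set q. star_transp N v"
    using star ys by auto
  define a g where "a = w N" and "g = b N"
  have w: "w = transpose a N" "a \<noteq> N" and b: "b = transpose g N" "g \<noteq> N"
    unfolding a_def g_def using star_transpD[OF sw N] star_transpD[OF sb N] by blast+
  have ag: "a \<noteq> g"
    using w b bw by auto
  have fix_pa: "prodw p a = a" and fix_qa: "prodw q a = a" and fix_qg: "prodw q g = g"
    using prodw_fixes_fresh[OF N sp sw] prodw_fixes_fresh[OF N sq sw]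
      prodw_fixes_fresh[OF N sq sb] fresh unfolding a_def g_def by auto
  have inj_p: "inj (prodw p)" and inj_q: "inj (prodw q)"
    using bij_prodw[of p N] bij_prodw[of q N] sp sq star_transpD(4)[OF _ N] bij_is_inj by auto
  \<comment> \<open>Follow the point a through the word: it ends at the image under p of v = q N.\<close>
  define v where "v = prodw q N"
  have "v \<noteq> a" "v \<noteq> g"
    using inj_q fix_qa fix_qg w(2) b(2) unfolding v_def by (metis injD)+
  then have "b (w (b v)) = v"
    using w b ag by (auto simp: transpose_def)
  then have "prodw (ys @ [w]) a = prodw p v"
    using ys w(1) unfolding v_def by simp
  moreover have "prodw p v \<noteq> a"
    using inj_p fix_pa \<open>v \<noteq> a\<close> by (metis injD)
  ultimately show ?thesis
    by (metis id_apply)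
qed

lemma split_single:
  assumes "count_list xs w = 1"
  obtains p q where "xs = p @ w # q" "w \<notin> set p" "w \<notin> set q"
proof -
  have "w \<in> set xs"
    using assms by (metis count_list_0_iff zero_neq_one)
  then obtain p q where xs: "xs = p @ w # q" "w \<notin> set p"
    using split_list_first by metis
  then have "count_list q w = 0"
    using assms by (simp add: count_list_0_iff)
  then show ?thesis
    using that xs by (simp add: count_list_0_iff)
qed

lemma tight_all_repeated:
  assumes N: "N \<ge> 2" and star: "\<forall>w\<in>set ws. star_transp N w" and "ws \<noteq> []"
    and repeated: "\<forall>w\<in>set ws. count_list ws w \<noteq> 1" and tight: "tight N ws"
  obtains ys w where "ws = ys @ [w]" "tight N ys" "prodw ws = id"
    "\<forall>x\<in>set ws. count_list ws x = 2"
proof -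
  have at_least_twice: "\<forall>x\<in>set ws. count_list ws x \<ge> 2"
  proof
    fix x
    assume x: "x \<in> set ws"
    then have "count_list ws x \<noteq> 0"
      by (simp add: count_list_0_iff)
    moreover have "count_list ws x \<noteq> 1"
      using repeated x by blast
    ultimately show "count_list ws x \<ge> 2"
      by linarith
  qed
  have words: "\<forall>t\<in>set ws. is_transp N t"
    using star star_transpD(4)[OF _ N] by blast
  have "perm_length N (prodw ws) = 0" and len: "length ws = 2 * card (set ws)"
    using length_vs_card(1)[OF at_least_twice] tight unfolding tight_def by linarith+
  then have id: "prodw ws = id" and twice: "\<forall>x\<in>set ws. count_list ws x = 2"
    using perm_length_eq_0[OF words] length_vs_card(2)[OF at_least_twice] by simp_all
  obtain ys w where ws: "ws = ys @ [w]"
    using \<open>ws \<noteq> []\<close> rev_exhaust by blast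
  have "is_transp N w"
    using words ws by simp
  have "prodw ys = prodw ys \<circ> (w \<circ> w)"
    using is_transp_comp_self[OF \<open>is_transp N w\<close>] by simp
  also have "\<dots> = prodw ws \<circ> w"
    using ws by (simp add: comp_assoc)
  finally have "prodw ys = w"
    using id by simp
  then have "perm_length N (prodw ys) \<le> 1"
    using perm_length_le[of "[w]" N] \<open>is_transp N w\<close> by simp
  moreover have "count_list ys w \<noteq> 0"
    using twice ws by simp
  then have "set ys = set ws"
    using ws by (auto simp: count_list_0_iff)
  ultimately have "tight N ys"
    using len ws unfolding tight_def by simp
  then show ?thesis
    using that ws id twice by blast
qed

(* Both properties are invariant under deleting a single letter
   or a fresh adjacent pair, and a word admitting neither deletion has neither property. *)
theorem tight_iff_nc12:
  assumes N: "N \<ge> 2"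
  shows "\<forall>w\<in>set ws. star_transp N w \<Longrightarrow> tight N ws \<longleftrightarrow> nc12 ws"
proof (induction ws rule: length_induct)
  case (1 ws)
  then have IH: "\<And>ys. length ys < length ws \<Longrightarrow> \<forall>w\<in>set ys. star_transp N w \<Longrightarrow>
      tight N ys \<longleftrightarrow> nc12 ys"
    and star: "\<forall>w\<in>set ws. star_transp N w"
    by blast+
  consider (empty) "ws = []"
    | (single) w where "count_list ws w = 1"
    | (pair) p w q where "ws = p @ w # w # q"
    | (neither) "ws \<noteq> []" "\<forall>w\<in>set ws. count_list ws w \<noteq> 1" "\<not> (\<exists>p w q. ws = p @ w # w # q)"
    by blast
  then show ?case
  proof cases
    case empty
    have "perm_length N (prodw []) = 0"
      using perm_length_le[of "[]" N] by simp
    then show ?thesis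
      using empty by (simp add: tight_def nc12_def crossing_def)
  next
    case (single w)
    then obtain p q where ws: "ws = p @ w # q" and fresh: "w \<notin> set p" "w \<notin> set q"
      by (rule split_single)
    show ?thesis
      using tight_remove_single[OF N _ fresh] nc12_remove_single[OF fresh]
        IH[of "p @ q"] star unfolding ws by simp
  next
    case (pair p w q)
    have "tight N ws \<longleftrightarrow> w \<notin> set (p @ q) \<and> tight N (p @ q)"
      using tight_remove_pair[OF N] star pair by simp
    moreover have "nc12 ws \<longleftrightarrow> w \<notin> set (p @ q) \<and> nc12 (p @ q)"
      using nc12_remove_pair pair by simp
    moreover have "tight N (p @ q) \<longleftrightarrow> nc12 (p @ q)"
      using IH[of "p @ q"] star pair by simp
    ultimately show ?thesis
      by blast
  next
    case neither
    have "\<not> nc12 ws"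
      using nc12_reducible neither by blast
    moreover have "\<not> tight N ws"
    proof
      assume "tight N ws"
      then obtain ys w where ws: "ws = ys @ [w]" and "tight N ys" "prodw ws = id"
        and twice: "\<forall>x\<in>set ws. count_list ws x = 2"
        by (rule tight_all_repeated[OF N star neither(1,2)])
      then have "\<not> crossing ys"
        using IH[of ys] star by (simp add: nc12_def)
      then have "prodw ws \<noteq> id"
        using doubled_word_not_id[OF N] star twice neither(3) ws by simp
      then show False
        using \<open>prodw ws = id\<close> by simp
    qed
    ultimately show ?thesis
      by simp
  qed
qed

lemma seq_prod_eq: "seq_prod a m = prodw (map a [1..<m+1])"
proof -
  have "foldr (\<lambda>j f. a j \<circ> f) xs id = prodw (map a xs)" for xs
    by (induction xs) simp_all
  then show ?thesis
    unfolding seq_prod_def by simp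
qed

definition block :: "(nat \<Rightarrow> 'b) \<Rightarrow> nat \<Rightarrow> 'b \<Rightarrow> nat set" where
  "block a m v = {k \<in> {1..m}. a k = v}"

lemma kernel_partition_eq: "kernel_partition a m = block a m ` a ` {1..m}"
  unfolding kernel_partition_def block_def by auto

lemma inj_on_block: "inj_on (block a m) (a ` {1..m})"
proof (rule inj_onI)
  fix v v'
  assume "v \<in> a ` {1..m}" and eq: "block a m v = block a m v'"
  then obtain j where "j \<in> {1..m}" "a j = v"
    by blast
  then have "j \<in> block a m v"
    by (simp add: block_def)
  then have "j \<in> block a m v'"
    using eq by simp
  then show "v = v'"
    using \<open>a j = v\<close> by (simp add: block_def)
qed

lemma set_map_upt: "set (map a [1..<m+1]) = a ` {1..m}"
  by auto

lemma card_kernel_partition: "card (kernel_partition a m) = card (set (map a [1..<m+1]))"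
  unfolding kernel_partition_eq set_map_upt by (rule card_image[OF inj_on_block])

lemma card_block: "card (block a m v) = count_list (map a [1..<m+1]) v"
proof -
  have "count_list (map a [1..<m+1]) v = length (filter (\<lambda>k. v = a k) [1..<m+1])"
    by (simp add: count_list_eq_length_filter filter_map comp_def del: upt_Suc)
  also have "\<dots> = card ({k. v = a k} \<inter> set [1..<m+1])"
    by (rule distinct_length_filter) simp
  also have "{k. v = a k} \<inter> set [1..<m+1] = block a m v"
    unfolding block_def by auto
  finally show ?thesis by simp
qed

lemma partition_kernel_partition: "partition_on {1..m} (kernel_partition a m)"
proof (rule partition_onI)
  show "\<Union> (kernel_partition a m) = {1..m}"
    unfolding kernel_partition_eq block_def by auto
next
  fix B C
  assume "B \<in> kernel_partition a m" "C \<in> kernel_partition a m" "B \<noteq> C"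
  then obtain v v' where v: "B = block a m v" "C = block a m v'"
    unfolding kernel_partition_eq by blast
  then have "v \<noteq> v'"
    using \<open>B \<noteq> C\<close> by blast
  then show "disjnt B C"
    unfolding v block_def disjnt_def by blast
next
  show "{} \<notin> kernel_partition a m"
  proof
    assume "{} \<in> kernel_partition a m"
    then obtain j where "j \<in> {1..m}" "{} = block a m (a j)"
      unfolding kernel_partition_eq by blast
    then show False
      unfolding block_def by blast
  qed
qed

lemma kernel_partition_block_sizes:
  "(\<forall>B\<in>kernel_partition a m. card B = 1 \<or> card B = 2) \<longleftrightarrow>
   (\<forall>x. count_list (map a [1..<m+1]) x \<le> 2)"
proof
  assume sizes: "\<forall>B\<in>kernel_partition a m. card B = 1 \<or> card B = 2"
  show "\<forall>x. count_list (map a [1..<m+1]) x \<le> 2"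
  proof
    fix x
    show "count_list (map a [1..<m+1]) x \<le> 2"
    proof (cases "x \<in> a ` {1..m}")
      case True
      then have "block a m x \<in> kernel_partition a m"
        unfolding kernel_partition_eq by (rule imageI)
      then have "card (block a m x) \<le> 2"
        using sizes by fastforce
      then show ?thesis
        by (simp add: card_block del: upt_Suc)
    next
      case False
      then have "x \<notin> set (map a [1..<m+1])"
        unfolding set_map_upt .
      then show ?thesis
        by (simp add: count_list_0_iff del: upt_Suc)
    qed
  qed
next
  assume counts: "\<forall>x. count_list (map a [1..<m+1]) x \<le> 2"
  show "\<forall>B\<in>kernel_partition a m. card B = 1 \<or> card B = 2"
  proof
    fix B
    assume "B \<in> kernel_partition a m"
    then obtain j where j: "j \<in> {1..m}" "B = block a m (a j)"
      unfolding kernel_partition_eq by blast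
    then have "card B \<noteq> 0"
      by (auto simp: block_def)
    moreover have "card B \<le> 2"
      using counts card_block[of a m "a j"] j(2) by simp
    ultimately show "card B = 1 \<or> card B = 2"
      by linarith
  qed
qed

lemma subseq_map_upt_mono:
  assumes "i \<le> k" "subseq xs (map a [k..<j])"
  shows "subseq xs (map a [i..<j])"
proof (cases "k \<le> j")
  case True
  then have "[i..<j] = [i..<k] @ [k..<j]"
    using assms(1) upt_add_eq_append[of i k "j - k"] by simp
  then show ?thesis
    using assms(2) by (simp add: subseq_drop_many)
next
  case False
  then have "xs = []"
    using assms(2) list_emb_Nil2 by simp
  then show ?thesis
    by simp
qed

lemma subseq_Cons_map_upt:
  "subseq (x # xs) (map a [i..<j]) \<longleftrightarrow> (\<exists>k. i \<le> k \<and> k < j \<and> a k = x \<and> subseq xs (map a [Suc k..<j]))"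
proof (induction "j - i" arbitrary: i)
  case 0
  then show ?case by simp
next
  case (Suc d)
  then have upt: "[i..<j] = i # [Suc i..<j]"
    by (simp add: upt_conv_Cons)
  show ?case
  proof (cases "a i = x")
    case True
    show ?thesis
      unfolding upt using True Suc(2) subseq_map_upt_mono[of "Suc i" "Suc _" xs a j]
      by (auto simp del: upt_Suc)
  next
    case False
    then have "subseq (x # xs) (map a [i..<j]) \<longleftrightarrow> subseq (x # xs) (map a [Suc i..<j])"
      unfolding upt by simp
    also have "\<dots> \<longleftrightarrow> (\<exists>k. Suc i \<le> k \<and> k < j \<and> a k = x \<and> subseq xs (map a [Suc k..<j]))"
      using Suc by simp
    also have "\<dots> \<longleftrightarrow> (\<exists>k. i \<le> k \<and> k < j \<and> a k = x \<and> subseq xs (map a [Suc k..<j]))"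
    proof
      assume "\<exists>k. Suc i \<le> k \<and> k < j \<and> a k = x \<and> subseq xs (map a [Suc k..<j])"
      then show "\<exists>k. i \<le> k \<and> k < j \<and> a k = x \<and> subseq xs (map a [Suc k..<j])"
        using Suc_leD by blast
    next
      assume "\<exists>k. i \<le> k \<and> k < j \<and> a k = x \<and> subseq xs (map a [Suc k..<j])"
      then obtain k where k: "i \<le> k" "k < j" "a k = x" "subseq xs (map a [Suc k..<j])"
        by blast
      then have "Suc i \<le> k"
        using False by (cases "k = i") auto
      then show "\<exists>k. Suc i \<le> k \<and> k < j \<and> a k = x \<and> subseq xs (map a [Suc k..<j])"
        using k by blast
    qed
    finally show ?thesis .
  qed
qed

lemma subseq_Cons_map_uptI:
  "i \<le> k \<Longrightarrow> k < j \<Longrightarrow> a k = x \<Longrightarrow> subseq xs (map a [Suc k..<j]) \<Longrightarrow> subseq (x # xs) (map a [i..<j])"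
  unfolding subseq_Cons_map_upt by (rule exI[of _ k]) simp

lemma subseq4_map_upt:
  "subseq [x, y, x', y'] (map a [i..<j]) \<longleftrightarrow>
   (\<exists>k1 l1 k2 l2. i \<le> k1 \<and> k1 < l1 \<and> l1 < k2 \<and> k2 < l2 \<and> l2 < j
      \<and> a k1 = x \<and> a l1 = y \<and> a k2 = x' \<and> a l2 = y')"
  (is "_ \<longleftrightarrow> ?flat")
proof
  assume "subseq [x, y, x', y'] (map a [i..<j])"
  then show ?flat
    unfolding subseq_Cons_map_upt by (auto simp: Suc_le_eq simp del: upt_Suc)
next
  assume ?flat
  then obtain k1 l1 k2 l2 where k: "i \<le> k1" "k1 < l1" "l1 < k2" "k2 < l2" "l2 < j"
    "a k1 = x" "a l1 = y" "a k2 = x'" "a l2 = y'"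
    by (elim exE conjE) (rule that; assumption)
  have "subseq [y'] (map a [Suc k2..<j])"
    by (rule subseq_Cons_map_uptI[of _ l2]) (use k in auto)
  then have "subseq [x', y'] (map a [Suc l1..<j])"
    by (rule subseq_Cons_map_uptI[of _ k2, rotated 3]) (use k in auto)
  then have "subseq [y, x', y'] (map a [Suc k1..<j])"
    by (rule subseq_Cons_map_uptI[of _ l1, rotated 3]) (use k in auto)
  then show "subseq [x, y, x', y'] (map a [i..<j])"
    by (rule subseq_Cons_map_uptI[of _ k1, rotated 3]) (use k in auto)
qed

lemma crossing_map_upt:
  "crossing (map a [i..<j]) \<longleftrightarrow> (\<exists>k1 l1 k2 l2. i \<le> k1 \<and> k1 < l1 \<and> l1 < k2 \<and> k2 < l2 \<and> l2 < j
      \<and> a k1 = a k2 \<and> a l1 = a l2 \<and> a k1 \<noteq> a l1)"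
    (is "_ \<longleftrightarrow> ?pattern")
proof
  assume "crossing (map a [i..<j])"
  then obtain x y where xy: "x \<noteq> y" "subseq [x, y, x, y] (map a [i..<j])"
    unfolding crossing_def by (elim exE conjE) (rule that; assumption)
  from xy(2) obtain k1 l1 k2 l2 where k: "i \<le> k1" "k1 < l1" "l1 < k2" "k2 < l2" "l2 < j"
    "a k1 = x" "a l1 = y" "a k2 = x" "a l2 = y"
    unfolding subseq4_map_upt by (elim exE conjE) (rule that; assumption)
  show ?pattern
    by (rule exI[of _ k1], rule exI[of _ l1], rule exI[of _ k2], rule exI[of _ l2]) (use k xy in simp)
next
  assume ?pattern
  then obtain k1 l1 k2 l2 where k: "i \<le> k1" "k1 < l1" "l1 < k2" "k2 < l2" "l2 < j"
    "a k1 = a k2" "a l1 = a l2" "a k1 \<noteq> a l1"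
    by (elim exE conjE) (rule that; assumption)
  have "subseq [a k1, a l1, a k1, a l1] (map a [i..<j])"
    unfolding subseq4_map_upt
    by (rule exI[of _ k1], rule exI[of _ l1], rule exI[of _ k2], rule exI[of _ l2]) (use k in simp)
  then show "crossing (map a [i..<j])"
    unfolding crossing_def using k(8) by blast
qed

lemma block_in_kernel_partition: "k \<in> {1..m} \<Longrightarrow> block a m (a k) \<in> kernel_partition a m"
  unfolding kernel_partition_eq by (intro imageI)

lemma crossing_blocks:
  assumes k: "1 \<le> k1" "k1 < l1" "l1 < k2" "k2 < l2" "l2 \<le> m"
    and eq: "a k1 = a k2" "a l1 = a l2" "a k1 \<noteq> a l1"
  shows "\<not> noncrossing (kernel_partition a m)"
proof
  assume nc: "noncrossing (kernel_partition a m)"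
  let ?B = "block a m (a k1)" and ?C = "block a m (a l1)"
  have blocks: "?B \<in> kernel_partition a m" "?C \<in> kernel_partition a m"
    using k by (simp_all add: block_in_kernel_partition)
  have members: "k1 \<in> ?B" "k2 \<in> ?B" "l1 \<in> ?C" "l2 \<in> ?C"
    using k eq by (simp_all add: block_def)
  have "l1 \<notin> ?B"
    using eq(3) by (simp add: block_def)
  then have "?B \<noteq> ?C"
    using members(3) by blast
  then have "\<not> (\<exists>k1 l1 k2 l2. k1 < l1 \<and> l1 < k2 \<and> k2 < l2
               \<and> k1 \<in> ?B \<and> k2 \<in> ?B \<and> l1 \<in> ?C \<and> l2 \<in> ?C)"
    using nc[unfolded noncrossing_def, rule_format, OF blocks] by blast
  moreover have "\<exists>k1 l1 k2 l2. k1 < l1 \<and> l1 < k2 \<and> k2 < l2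
               \<and> k1 \<in> ?B \<and> k2 \<in> ?B \<and> l1 \<in> ?C \<and> l2 \<in> ?C"
    by (rule exI[of _ k1], rule exI[of _ l1], rule exI[of _ k2], rule exI[of _ l2])
      (use k members in simp)
  ultimately show False
    by contradiction
qed

lemma noncrossing_kernel_partition:
  "noncrossing (kernel_partition a m) \<longleftrightarrow> \<not> crossing (map a [1..<m+1])"
proof
  assume "noncrossing (kernel_partition a m)"
  then show "\<not> crossing (map a [1..<m+1])"
    unfolding crossing_map_upt using crossing_blocks[of _ _ _ _ m a] by fastforce
next
  assume ncr: "\<not> crossing (map a [1..<m+1])"
  show "noncrossing (kernel_partition a m)"
    unfolding noncrossing_def
  proof (intro ballI impI notI)
    fix B C
    assume B: "B \<in> kernel_partition a m" and C: "C \<in> kernel_partition a m" and "B \<noteq> C"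
      and "\<exists>k1 l1 k2 l2. k1 < l1 \<and> l1 < k2 \<and> k2 < l2 \<and> k1 \<in> B \<and> k2 \<in> B \<and> l1 \<in> C \<and> l2 \<in> C"
    then obtain k1 l1 k2 l2 where k: "k1 < l1" "l1 < k2" "k2 < l2" "k1 \<in> B" "k2 \<in> B" "l1 \<in> C" "l2 \<in> C"
      by (elim exE conjE) (rule that; assumption)
    obtain v v' where v: "B = block a m v" "C = block a m v'"
      using B C unfolding kernel_partition_eq by blast
    then have "v \<noteq> v'"
      using \<open>B \<noteq> C\<close> by blast
    have "crossing (map a [1..<m+1])"
      unfolding crossing_map_upt
      by (rule exI[of _ k1], rule exI[of _ l1], rule exI[of _ k2], rule exI[of _ l2])
        (use k v \<open>v \<noteq> v'\<close> in \<open>auto simp: block_def\<close>)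
    then show False
      using ncr by contradiction
  qed
qed

lemma kernel_partition_NC12_iff: "kernel_partition a m \<in> NC12 m \<longleftrightarrow> nc12 (map a [1..<m+1])"
  unfolding NC12_def nc12_def mem_Collect_eq
  using partition_kernel_partition[of m a] kernel_partition_block_sizes[of a m]
    noncrossing_kernel_partition[of a m]
  by argo

theorem lemma5:
  fixes N m :: nat and a :: "nat \<Rightarrow> nat \<Rightarrow> nat"
  assumes "N \<ge> 2"
    and "\<forall>j\<in>{1..m}. \<exists>\<alpha>. 1 \<le> \<alpha> \<and> \<alpha> \<le> N - 1 \<and> a j = transpose \<alpha> N"
  shows "2 * card (kernel_partition a m) \<ge> perm_length N (seq_prod a m) + m
         \<longleftrightarrow> kernel_partition a m \<in> NC12 m"
proof -
  have "\<forall>w\<in>set (map a [1..<m+1]). star_transp N w"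
    using assms(2) unfolding star_transp_def set_map_upt by blast
  then have "tight N (map a [1..<m+1]) \<longleftrightarrow> nc12 (map a [1..<m+1])"
    by (rule tight_iff_nc12[OF assms(1)])
  moreover have "length (map a [1..<m+1]) = m"
    by simp
  ultimately show ?thesis
    unfolding tight_def seq_prod_eq card_kernel_partition kernel_partition_NC12_iff by simp
qed

end
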